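(* Let $X_1,X_2,\ldots$ be i.i.d. real random variables with $\mathbf{E}X_1=0$ and $\mathbf{E}X_1^2=1$, $S_n=X_1+\cdots+X_n$ and $S_n^{(2)}=S_1+\cdots+S_n$. Then there exists a constant $C$ such that for all $n\ge1$ $$\sup_{x,y\in\mathbb{R}}\mathbf{P}\left(|S_n^{(2)}-x|\le1,\ |S_n-y|\le1\right)\le\frac{C}{n^2}\quad\text{and}\quad\sup_{x\in\mathbb{R}}\mathbf{P}\left(|S_n^{(2)}-x|\le1\right)\le\frac{C}{n^{3/2}}.$$ *)

theory Defs
  imports "HOL-Probability.Probability"
begin

text \<open>Partial sums with the paper's indexing shifted: X 0, X 1, ... stand for X_1, X_2, ...
  S_n = X_1 + ... + X_n and S^(2)_n = S_1 + ... + S_n.\<close>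

definition partial_sum :: "(nat \<Rightarrow> 'a \<Rightarrow> real) \<Rightarrow> nat \<Rightarrow> 'a \<Rightarrow> real" where
  "partial_sum X n = (\<lambda>\<omega>. \<Sum>i<n. X i \<omega>)"

definition second_partial_sum :: "(nat \<Rightarrow> 'a \<Rightarrow> real) \<Rightarrow> nat \<Rightarrow> 'a \<Rightarrow> real" where
  "second_partial_sum X n = (\<lambda>\<omega>. \<Sum>k=1..n. partial_sum X k \<omega>)"

end

theory Submission
  imports Defs
begin

(* The characteristic function of alpha * S2_n + beta * S_n factorises over the X_i, with
   frequencies alpha * (n - i) + beta, so it is bounded by exp (- 1/2 * sum_{a=1..n} psi (alpha * a + beta))
   where psi c = 1 - |phi c|^2 = E (1 - cos (c * (X_0 - X_1))).  Near the origin psi is comparable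
   to c^2 (variance one), and psi (u - v) <= 2 psi u + 2 psi v; these two properties alone give
   sum_a psi (alpha * a + beta) >= const * min (n^3 alpha^2 + n beta^2, n) for small alpha, beta.
   An Esseen-type smoothing inequality with Fejer kernels converts this decay into the bounds:
   probing S2_n at the frequencies k / (n sqrt n) and S_n at k / sqrt n bounds the probability of
   a unit box by O (1 / (n * sqrt n * sqrt n)) = O (1 / n^2); probing S2_n alone gives
   O (1 / n^(3/2)). *)

section \<open>Inequalities for the cosine\<close>

lemma cos_ge_one_half:
  fixes z :: real
  assumes "\<bar>z\<bar> \<le> 1"
  shows "1/2 \<le> cos z"
proof -
  have "cos (pi/3) \<le> cos \<bar>z\<bar>"
    using assms pi_gt3 by (subst cos_mono_le_eq) auto
  then show ?thesis by (simp add: cos_60)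
qed

lemma one_minus_cos_eq: "1 - cos z = 2 * (sin (z/2))\<^sup>2" for z :: real
  using cos_double_sin[of "z/2"] by simp

lemma square_add_le: "(x + y)\<^sup>2 \<le> 2 * x\<^sup>2 + 2 * y\<^sup>2" for x y :: real
proof -
  have "(x + y)\<^sup>2 + (x - y)\<^sup>2 = 2 * x\<^sup>2 + 2 * y\<^sup>2" by algebra
  then show ?thesis by (metis le_add_same_cancel1 zero_le_power2)
qed

lemma one_minus_cos_le: "1 - cos z \<le> z\<^sup>2 / 2" for z :: real
proof -
  have "(sin (z/2))\<^sup>2 \<le> (z/2)\<^sup>2"
    using abs_sin_x_le_abs_x[of "z/2"] by (metis abs_ge_zero power2_abs power_mono)
  then show ?thesis unfolding one_minus_cos_eq by (simp add: power_divide)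
qed

lemma abs_sin_ge:
  fixes w :: real
  assumes "\<bar>w\<bar> \<le> 1/2"
  shows "23/24 * \<bar>w\<bar> \<le> \<bar>sin w\<bar>"
proof -
  have "\<bar>sin w - (\<Sum>m<3. sin_coeff m * w ^ m)\<bar> \<le> inverse (fact 3) * \<bar>w\<bar> ^ 3"
    by (rule Maclaurin_sin_bound)
  then have taylor: "\<bar>sin w - w\<bar> \<le> \<bar>w\<bar> * \<bar>w\<bar>\<^sup>2 / 6"
    by (simp add: sin_coeff_def eval_nat_numeral fact_numeral)
  have "\<bar>w\<bar>\<^sup>2 \<le> (1/2)\<^sup>2"
    using assms by (intro power_mono) auto
  then have "\<bar>w\<bar> * \<bar>w\<bar>\<^sup>2 \<le> \<bar>w\<bar> * (1/4)"
    by (intro mult_left_mono) (auto simp: power2_eq_square)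
  with taylor show ?thesis by linarith
qed

lemma one_minus_cos_ge:
  fixes z :: real
  assumes "\<bar>z\<bar> \<le> 1"
  shows "z\<^sup>2 / 5 \<le> 1 - cos z"
proof -
  have "(23/24 * \<bar>z/2\<bar>)\<^sup>2 \<le> \<bar>sin (z/2)\<bar>\<^sup>2"
    using assms abs_sin_ge[of "z/2"] by (intro power_mono) auto
  then have "z\<^sup>2 * (529/2304) \<le> (sin (z/2))\<^sup>2"
    by (simp add: power_mult_distrib power_divide)
  then show ?thesis
    unfolding one_minus_cos_eq using zero_le_power2[of z] by linarith
qed

lemma one_minus_cos_diff_le:
  fixes a b :: real
  shows "1 - cos (a - b) \<le> 2 * (1 - cos a) + 2 * (1 - cos b)"
proof -
  have "sin ((a - b)/2) = sin (a/2) * cos (b/2) - cos (a/2) * sin (b/2)"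
    using sin_diff[of "a/2" "b/2"] by (simp add: diff_divide_distrib)
  moreover have "\<bar>sin (a/2) * cos (b/2)\<bar> \<le> \<bar>sin (a/2)\<bar>" "\<bar>cos (a/2) * sin (b/2)\<bar> \<le> \<bar>sin (b/2)\<bar>"
    by (simp_all add: abs_mult mult_left_le mult_left_le_one_le)
  ultimately have "\<bar>sin ((a - b)/2)\<bar> \<le> \<bar>sin (a/2)\<bar> + \<bar>sin (b/2)\<bar>"
    by linarith
  then have "\<bar>sin ((a - b)/2)\<bar>\<^sup>2 \<le> (\<bar>sin (a/2)\<bar> + \<bar>sin (b/2)\<bar>)\<^sup>2"
    by (intro power_mono) auto
  also have "\<dots> \<le> 2 * \<bar>sin (a/2)\<bar>\<^sup>2 + 2 * \<bar>sin (b/2)\<bar>\<^sup>2"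
    by (rule square_add_le)
  finally show ?thesis
    unfolding one_minus_cos_eq power2_abs by linarith
qed

section \<open>Quasi-quadratic functions summed along arithmetic progressions\<close>

locale quasi_triangle =
  fixes \<psi> :: "real \<Rightarrow> real"
  assumes nonneg: "0 \<le> \<psi> u"
    and diff_le: "\<psi> (u - v) \<le> 2 * \<psi> u + 2 * \<psi> v"
begin

text \<open>Each of the \<open>n - b\<close> pairs \<open>(a, a + b)\<close> in \<open>{1..n}\<close> has difference \<open>\<alpha> b\<close> between its two
  arguments; every term of the sum occurs in at most two pairs.\<close>

lemma affine_sum_ge:
  fixes \<alpha> \<beta> :: real and b n :: nat
  assumes "b \<le> n"
  shows "real (n - b) * \<psi> (\<alpha> * real b) \<le> 4 * (\<Sum>a=1..n. \<psi> (\<alpha> * real a + \<beta>))"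
proof -
  let ?f = "\<lambda>a. \<psi> (\<alpha> * real a + \<beta>)"
  have pair: "\<psi> (\<alpha> * real b) \<le> 2 * ?f (a + b) + 2 * ?f a" for a
  proof -
    have "\<alpha> * real b = (\<alpha> * real (a + b) + \<beta>) - (\<alpha> * real a + \<beta>)"
      by (simp add: algebra_simps)
    then show ?thesis using diff_le[of "\<alpha> * real (a + b) + \<beta>" "\<alpha> * real a + \<beta>"] by simp
  qed
  have "real (n - b) * \<psi> (\<alpha> * real b) = (\<Sum>a=1..n-b. \<psi> (\<alpha> * real b))"
    by simp
  also have "\<dots> \<le> (\<Sum>a=1..n-b. 2 * ?f (a + b) + 2 * ?f a)"
    by (intro sum_mono pair)
  also have "\<dots> = 2 * (\<Sum>a=1..n-b. ?f (a + b)) + 2 * (\<Sum>a=1..n-b. ?f a)"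
    by (simp add: sum.distrib sum_distrib_left)
  also have "(\<Sum>a=1..n-b. ?f (a + b)) = (\<Sum>a=1+b..n-b+b. ?f a)"
    by (rule sum.shift_bounds_cl_nat_ivl[symmetric])
  also have "(\<Sum>a=1+b..n-b+b. ?f a) \<le> (\<Sum>a=1..n. ?f a)"
    using assms by (intro sum_mono2 nonneg) auto
  also have "(\<Sum>a=1..n-b. ?f a) \<le> (\<Sum>a=1..n. ?f a)"
    by (intro sum_mono2 nonneg) auto
  finally show ?thesis by simp
qed

end

interpretation square: quasi_triangle "\<lambda>u. u\<^sup>2"
  by unfold_locales (use square_add_le[of _ "- _"] in simp_all)

lemma sum_affine_square_ge:
  fixes \<alpha> \<beta> :: real and n :: nat
  assumes "2 \<le> n"
  shows "(real n ^ 3 * \<alpha>\<^sup>2 + real n * \<beta>\<^sup>2) / 360 \<le> (\<Sum>a=1..n. (\<alpha> * real a + \<beta>)\<^sup>2)"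
    (is "_ \<le> ?S")
proof (cases "2 * \<bar>\<alpha>\<bar> * real n \<le> \<bar>\<beta>\<bar>")
  case True
  have "\<beta>\<^sup>2 / 4 \<le> (\<alpha> * real a + \<beta>)\<^sup>2" if "a \<in> {1..n}" for a
  proof -
    have "\<bar>\<alpha> * real a\<bar> \<le> \<bar>\<alpha>\<bar> * real n"
      using that by (simp add: abs_mult mult_left_mono)
    then have "(\<bar>\<beta>\<bar> / 2)\<^sup>2 \<le> \<bar>\<alpha> * real a + \<beta>\<bar>\<^sup>2"
      using True by (intro power_mono) linarith+
    then show ?thesis by (simp add: power_divide)
  qed
  then have "real n * \<beta>\<^sup>2 / 4 \<le> ?S"
    using sum_mono[of "{1..n}" "\<lambda>_. \<beta>\<^sup>2 / 4"] by simp
  moreover have "real n ^ 3 * \<alpha>\<^sup>2 \<le> real n * \<beta>\<^sup>2 / 4"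
  proof -
    have "(\<bar>\<alpha>\<bar> * real n)\<^sup>2 \<le> (\<bar>\<beta>\<bar> / 2)\<^sup>2"
      using True by (intro power_mono) auto
    then have "real n * (\<alpha>\<^sup>2 * (real n)\<^sup>2) \<le> real n * (\<beta>\<^sup>2 / 4)"
      by (intro mult_left_mono) (auto simp: power_mult_distrib power_divide)
    then show ?thesis by (simp add: power2_eq_square power3_eq_cube mult_ac)
  qed
  ultimately have "real n ^ 3 * \<alpha>\<^sup>2 + real n * \<beta>\<^sup>2 \<le> 5 * ?S" by linarith
  moreover have "0 \<le> ?S" by (simp add: sum_nonneg)
  ultimately show ?thesis by (subst pos_divide_le_eq) linarith+
next
  case False
  define b where "b = n div 2"
  have "n \<le> 3 * b"
    using assms unfolding b_def by presburger
  then have b_ge: "real n / 3 \<le> real b"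
    by linarith
  have nb_ge: "real n / 2 \<le> real (n - b)"
    unfolding b_def by linarith
  have "(\<bar>\<alpha>\<bar> * (real n / 3))\<^sup>2 \<le> (\<bar>\<alpha>\<bar> * real b)\<^sup>2"
    using b_ge by (intro power_mono mult_left_mono) auto
  then have "real n / 2 * (\<alpha>\<^sup>2 * (real n)\<^sup>2 / 9) \<le> real (n - b) * (\<alpha> * real b)\<^sup>2"
    using nb_ge by (intro mult_mono) (auto simp: power_mult_distrib power_divide)
  also have "\<dots> \<le> 4 * ?S"
    by (rule square.affine_sum_ge) (simp add: b_def)
  finally have "real n ^ 3 * \<alpha>\<^sup>2 \<le> 72 * ?S"
    by (simp add: power2_eq_square power3_eq_cube mult_ac)
  moreover have "real n * \<beta>\<^sup>2 \<le> 4 * (real n ^ 3 * \<alpha>\<^sup>2)"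
  proof -
    have "\<bar>\<beta>\<bar>\<^sup>2 \<le> (2 * \<bar>\<alpha>\<bar> * real n)\<^sup>2"
      using False by (intro power_mono) auto
    then have "real n * \<beta>\<^sup>2 \<le> real n * (4 * \<alpha>\<^sup>2 * (real n)\<^sup>2)"
      by (intro mult_left_mono) (auto simp: power_mult_distrib)
    then show ?thesis by (simp add: power2_eq_square power3_eq_cube algebra_simps)
  qed
  ultimately show ?thesis by simp
qed

text \<open>A gap \<open>b \<le> n/2\<close> at which \<open>\<alpha> b\<close> is neither too small nor too large: either \<open>n/2\<close> itself
  or the largest \<open>b\<close> with \<open>\<bar>\<alpha>\<bar> b \<le> d\<close>.\<close>

lemma affine_gap_exists:
  fixes \<alpha> \<eta> d :: real and n :: nat
  assumes "2 \<le> n" "\<eta> < \<bar>\<alpha>\<bar> * real n" "\<bar>\<alpha>\<bar> \<le> d" "0 < \<eta>" "\<eta> \<le> d / 2"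
  obtains b where "b \<le> n div 2" "\<eta> / 3 \<le> \<bar>\<alpha> * real b\<bar>" "\<bar>\<alpha> * real b\<bar> \<le> d"
proof -
  have \<alpha>_pos: "0 < \<bar>\<alpha>\<bar>"
    using assms by (metis abs_ge_zero le_less_trans mult_eq_0_iff order_less_le)
  define x where "x = d / \<bar>\<alpha>\<bar>"
  define m where "m = nat \<lfloor>x\<rfloor>"
  have "1 \<le> x"
    using \<alpha>_pos assms(3) by (simp add: x_def)
  then have "real m = of_int \<lfloor>x\<rfloor>" "1 \<le> real_of_int \<lfloor>x\<rfloor>"
    unfolding m_def by (auto simp: le_floor_iff)
  then have m_le: "real m \<le> x" and m_ge: "x / 2 \<le> real m"
    using real_of_int_floor_gt_diff_one[of x] by linarith+
  show ?thesis
  proof (cases "n div 2 \<le> m")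
    case True
    have "n \<le> 3 * (n div 2)"
      using assms(1) by presburger
    then have "\<bar>\<alpha>\<bar> * real n \<le> \<bar>\<alpha>\<bar> * (3 * real (n div 2))"
      by (intro mult_left_mono) auto
    then have "\<eta> / 3 \<le> \<bar>\<alpha>\<bar> * real (n div 2)"
      using assms(2) by linarith
    moreover have "\<bar>\<alpha>\<bar> * real (n div 2) \<le> \<bar>\<alpha>\<bar> * x"
      using True m_le by (intro mult_left_mono) auto
    ultimately show ?thesis
      using \<alpha>_pos by (intro that[of "n div 2"]) (auto simp: abs_mult x_def)
  next
    case False
    have "\<bar>\<alpha>\<bar> * (x / 2) \<le> \<bar>\<alpha>\<bar> * real m" "\<bar>\<alpha>\<bar> * real m \<le> \<bar>\<alpha>\<bar> * x"
      using m_ge m_le by (intro mult_left_mono; simp)+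
    then show ?thesis
      using False assms(5) \<alpha>_pos by (intro that[of m]) (auto simp: abs_mult x_def)
  qed
qed

locale quasi_quadratic = quasi_triangle +
  fixes k0 d0 B :: real
  assumes ge_square: "\<bar>u\<bar> \<le> d0 \<Longrightarrow> k0 * u\<^sup>2 \<le> \<psi> u"
    and le_square: "\<psi> u \<le> B * u\<^sup>2"
    and k0_pos: "0 < k0" and d0_pos: "0 < d0" and B_pos: "0 < B"
begin

text \<open>\<open>eta\<close> is small enough that \<open>\<psi> \<le> k0 d0\<^sup>2 / 32\<close> on \<open>[-eta, eta]\<close>, far below the value
  \<open>k0 d0\<^sup>2 / 4\<close> that \<open>\<psi>\<close> exceeds on \<open>d0/2 \<le> \<bar>u\<bar> \<le> d0\<close>; \<open>kappa\<close> is the resulting linear rate.\<close>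

definition eta :: real where
  "eta = d0 * min (1/2) (k0 / (16 * B))"

definition kappa :: real where
  "kappa = k0 * eta\<^sup>2 / 72"

lemma eta_pos: "0 < eta"
  using k0_pos d0_pos B_pos by (simp add: eta_def)

lemma eta_le: "eta \<le> d0 / 2"
  using d0_pos by (simp add: eta_def)

lemma kappa_pos: "0 < kappa"
  using k0_pos eta_pos by (simp add: kappa_def)

lemma le_below_eta:
  assumes "\<bar>u\<bar> \<le> eta"
  shows "\<psi> u \<le> k0 * d0\<^sup>2 / 32"
proof -
  define e where "e = min (1/2) (k0 / (16 * B))"
  have e: "0 < e" "e \<le> 1/2" "e \<le> k0 / (16 * B)"
    using k0_pos B_pos by (auto simp: e_def)
  have "\<bar>u\<bar>\<^sup>2 \<le> (e * d0)\<^sup>2"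
    using assms by (intro power_mono) (auto simp: eta_def e_def mult.commute)
  then have "u\<^sup>2 \<le> (e * d0)\<^sup>2"
    by simp
  also have "\<dots> = (e * e) * d0\<^sup>2"
    by (simp add: power2_eq_square)
  also have "\<dots> \<le> (k0 / (16 * B) * (1/2)) * d0\<^sup>2"
    using e by (intro mult_right_mono mult_mono) auto
  finally have "B * u\<^sup>2 \<le> B * ((k0 / (16 * B) * (1/2)) * d0\<^sup>2)"
    using B_pos by (intro mult_left_mono) auto
  then show ?thesis
    using le_square[of u] B_pos by simp
qed

lemma sum_ge_flat:
  assumes "2 \<le> n" "\<bar>\<alpha>\<bar> * real n \<le> eta" "\<bar>\<beta>\<bar> \<le> d0 / 2"
  shows "k0 / 360 * (real n ^ 3 * \<alpha>\<^sup>2 + real n * \<beta>\<^sup>2) \<le> (\<Sum>a=1..n. \<psi> (\<alpha> * real a + \<beta>))"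
proof -
  have pointwise: "k0 * (\<alpha> * real a + \<beta>)\<^sup>2 \<le> \<psi> (\<alpha> * real a + \<beta>)" if "a \<in> {1..n}" for a
  proof (rule ge_square)
    have "\<bar>\<alpha> * real a\<bar> \<le> \<bar>\<alpha>\<bar> * real n"
      using that by (simp add: abs_mult mult_left_mono)
    then show "\<bar>\<alpha> * real a + \<beta>\<bar> \<le> d0"
      using assms eta_le by linarith
  qed
  have "k0 * (\<Sum>a=1..n. (\<alpha> * real a + \<beta>)\<^sup>2) = (\<Sum>a=1..n. k0 * (\<alpha> * real a + \<beta>)\<^sup>2)"
    by (simp add: sum_distrib_left)
  also have "\<dots> \<le> (\<Sum>a=1..n. \<psi> (\<alpha> * real a + \<beta>))"
    by (intro sum_mono pointwise)
  finally have "k0 * (\<Sum>a=1..n. (\<alpha> * real a + \<beta>)\<^sup>2) \<le> (\<Sum>a=1..n. \<psi> (\<alpha> * real a + \<beta>))" .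
  moreover have "k0 / 360 * (real n ^ 3 * \<alpha>\<^sup>2 + real n * \<beta>\<^sup>2) \<le> k0 * (\<Sum>a=1..n. (\<alpha> * real a + \<beta>)\<^sup>2)"
    using sum_affine_square_ge[OF assms(1), of \<alpha> \<beta>] k0_pos by (simp add: mult_left_mono)
  ultimately show ?thesis by linarith
qed

lemma sum_ge_shifted:
  assumes "\<bar>\<alpha>\<bar> * real n \<le> eta" "d0 / 2 < \<bar>\<beta>\<bar>" "\<bar>\<beta>\<bar> \<le> d0"
  shows "k0 * d0\<^sup>2 / 16 * real n \<le> (\<Sum>a=1..n. \<psi> (\<alpha> * real a + \<beta>))"
proof -
  have "(d0/2)\<^sup>2 \<le> \<bar>\<beta>\<bar>\<^sup>2"
    using assms d0_pos by (intro power_mono) auto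
  then have "k0 * (d0/2)\<^sup>2 \<le> k0 * \<beta>\<^sup>2"
    using k0_pos by (intro mult_left_mono) auto
  also have "\<dots> \<le> \<psi> \<beta>"
    using assms by (intro ge_square) auto
  finally have at_\<beta>: "k0 * d0\<^sup>2 / 4 \<le> \<psi> \<beta>"
    by (simp add: power_divide)
  have pointwise: "k0 * d0\<^sup>2 / 16 \<le> \<psi> (\<alpha> * real a + \<beta>)" if "a \<in> {1..n}" for a
  proof -
    have "\<bar>\<alpha> * real a\<bar> \<le> \<bar>\<alpha>\<bar> * real n"
      using that by (simp add: abs_mult mult_left_mono)
    then have "\<psi> (\<alpha> * real a) \<le> k0 * d0\<^sup>2 / 32"
      using assms by (intro le_below_eta) linarith
    moreover have "\<psi> \<beta> \<le> 2 * \<psi> (\<alpha> * real a + \<beta>) + 2 * \<psi> (\<alpha> * real a)"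
      using diff_le[of "\<alpha> * real a + \<beta>" "\<alpha> * real a"] by simp
    moreover have "0 \<le> k0 * d0\<^sup>2"
      using k0_pos by simp
    ultimately show ?thesis
      using at_\<beta> by linarith
  qed
  have "k0 * d0\<^sup>2 / 16 * real n = (\<Sum>a=1..n. k0 * d0\<^sup>2 / 16)"
    by simp
  also have "\<dots> \<le> (\<Sum>a=1..n. \<psi> (\<alpha> * real a + \<beta>))"
    by (intro sum_mono pointwise)
  finally show ?thesis .
qed

lemma sum_ge_steep:
  assumes "2 \<le> n" "eta < \<bar>\<alpha>\<bar> * real n" "\<bar>\<alpha>\<bar> \<le> d0"
  shows "kappa * real n \<le> (\<Sum>a=1..n. \<psi> (\<alpha> * real a + \<beta>))"
proof -
  obtain b where b: "b \<le> n div 2" "eta / 3 \<le> \<bar>\<alpha> * real b\<bar>" "\<bar>\<alpha> * real b\<bar> \<le> d0"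
    using affine_gap_exists[OF assms eta_pos eta_le] .
  have "(eta / 3)\<^sup>2 \<le> \<bar>\<alpha> * real b\<bar>\<^sup>2"
    using b eta_pos by (intro power_mono) auto
  then have "k0 * (eta / 3)\<^sup>2 \<le> k0 * (\<alpha> * real b)\<^sup>2"
    using k0_pos by (intro mult_left_mono) auto
  also have "\<dots> \<le> \<psi> (\<alpha> * real b)"
    using b by (intro ge_square) auto
  finally have "real n / 2 * (k0 * (eta / 3)\<^sup>2) \<le> real (n - b) * \<psi> (\<alpha> * real b)"
    using b k0_pos by (intro mult_mono) auto
  also have "\<dots> \<le> 4 * (\<Sum>a=1..n. \<psi> (\<alpha> * real a + \<beta>))"
    using b by (intro affine_sum_ge) auto
  finally show ?thesis
    by (simp add: kappa_def power_divide mult_ac)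
qed

lemma sum_ge:
  assumes "2 \<le> n" "\<bar>\<alpha>\<bar> \<le> d0" "\<bar>\<beta>\<bar> \<le> d0"
  shows "min (k0 / 360 * (real n ^ 3 * \<alpha>\<^sup>2 + real n * \<beta>\<^sup>2)) (kappa * real n)
    \<le> (\<Sum>a=1..n. \<psi> (\<alpha> * real a + \<beta>))"
proof -
  consider "\<bar>\<alpha>\<bar> * real n \<le> eta" "\<bar>\<beta>\<bar> \<le> d0 / 2"
    | "\<bar>\<alpha>\<bar> * real n \<le> eta" "d0 / 2 < \<bar>\<beta>\<bar>"
    | "eta < \<bar>\<alpha>\<bar> * real n"
    by linarith
  then show ?thesis
  proof cases
    case 1
    then show ?thesis
      using sum_ge_flat assms by (simp add: min.coboundedI1)
  next
    case 2
    have "kappa \<le> k0 * d0\<^sup>2 / 16"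
    proof -
      have "k0 * eta\<^sup>2 \<le> k0 * (d0/2)\<^sup>2"
        using eta_le eta_pos k0_pos by (intro mult_left_mono power_mono) auto
      moreover have "0 \<le> k0 * d0\<^sup>2"
        using k0_pos by simp
      ultimately show ?thesis
        unfolding kappa_def by (simp add: power_divide)
    qed
    then have "kappa * real n \<le> k0 * d0\<^sup>2 / 16 * real n"
      by (intro mult_right_mono) auto
    also have "\<dots> \<le> (\<Sum>a=1..n. \<psi> (\<alpha> * real a + \<beta>))"
      using 2 assms by (intro sum_ge_shifted)
    finally show ?thesis
      by (rule min.coboundedI2)
  next
    case 3
    then show ?thesis
      using sum_ge_steep assms by (simp add: min.coboundedI2)
  qed
qed

end

section \<open>Characteristic functions of the partial sums\<close>

lemma second_partial_sum_eq:
  "second_partial_sum X n \<omega> = (\<Sum>i<n. real (n - i) * X i \<omega>)"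
proof (induction n)
  case 0
  then show ?case by (simp add: second_partial_sum_def)
next
  case (Suc n)
  have "second_partial_sum X (Suc n) \<omega> = second_partial_sum X n \<omega> + partial_sum X (Suc n) \<omega>"
    by (simp add: second_partial_sum_def)
  also have "\<dots> = (\<Sum>i<n. real (n - i) * X i \<omega> + X i \<omega>) + X n \<omega>"
    by (simp add: Suc partial_sum_def sum.distrib)
  also have "(\<Sum>i<n. real (n - i) * X i \<omega> + X i \<omega>) = (\<Sum>i<n. real (Suc n - i) * X i \<omega>)"
    by (intro sum.cong) (auto simp: Suc_diff_le algebra_simps)
  finally show ?case by simp
qed

locale iid = prob_space M for M :: "'a measure" +
  fixes X :: "nat \<Rightarrow> 'a \<Rightarrow> real"
  assumes measurable_X[measurable]: "\<And>i. X i \<in> borel_measurable M"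
    and indep: "indep_vars (\<lambda>_. borel) X UNIV"
    and ident: "\<And>i. distr M borel (X i) = distr M borel (X 0)"
    and integrable_X0: "integrable M (X 0)"
    and mean_zero: "integral\<^sup>L M (X 0) = 0"
    and integrable_X0_square: "integrable M (\<lambda>\<omega>. (X 0 \<omega>)\<^sup>2)"
    and variance_one: "integral\<^sup>L M (\<lambda>\<omega>. (X 0 \<omega>)\<^sup>2) = 1"
begin

lemma partial_sum_measurable[measurable]: "partial_sum X n \<in> borel_measurable M"
  unfolding partial_sum_def by measurable

lemma second_partial_sum_measurable[measurable]: "second_partial_sum X n \<in> borel_measurable M"
  unfolding second_partial_sum_def by measurable

lemma integral_ident:
  fixes f :: "real \<Rightarrow> 'b::{banach, second_countable_topology}"
  assumes [measurable]: "f \<in> borel_measurable borel"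
  shows "(\<integral>\<omega>. f (X i \<omega>) \<partial>M) = (\<integral>\<omega>. f (X 0 \<omega>) \<partial>M)"
proof -
  have "(\<integral>\<omega>. f (X i \<omega>) \<partial>M) = integral\<^sup>L (distr M borel (X i)) f"
    by (rule integral_distr[symmetric]) auto
  also have "\<dots> = (\<integral>\<omega>. f (X 0 \<omega>) \<partial>M)"
    unfolding ident[of i] by (rule integral_distr) auto
  finally show ?thesis .
qed

lemma integrable_ident:
  fixes f :: "real \<Rightarrow> 'b::{banach, second_countable_topology}"
  assumes [measurable]: "f \<in> borel_measurable borel"
  shows "integrable M (\<lambda>\<omega>. f (X i \<omega>)) \<longleftrightarrow> integrable M (\<lambda>\<omega>. f (X 0 \<omega>))"
proof -
  have "integrable M (\<lambda>\<omega>. f (X i \<omega>)) \<longleftrightarrow> integrable (distr M borel (X i)) f"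
    by (rule integrable_distr_eq[symmetric]) auto
  also have "\<dots> \<longleftrightarrow> integrable M (\<lambda>\<omega>. f (X 0 \<omega>))"
    unfolding ident[of i] by (rule integrable_distr_eq) auto
  finally show ?thesis .
qed

lemma integrable_X: "integrable M (X i)"
  using integrable_ident[of "\<lambda>x. x" i] integrable_X0 by simp

lemma integral_X: "(\<integral>\<omega>. X i \<omega> \<partial>M) = 0"
  using integral_ident[of "\<lambda>x. x" i] mean_zero by simp

lemma integrable_X_square: "integrable M (\<lambda>\<omega>. (X i \<omega>)\<^sup>2)"
  using integrable_ident[of "\<lambda>x. x\<^sup>2" i] integrable_X0_square by simp

lemma integral_X_square: "(\<integral>\<omega>. (X i \<omega>)\<^sup>2 \<partial>M) = 1"
  using integral_ident[of "\<lambda>x. x\<^sup>2" i] variance_one by simp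

definition phi :: "real \<Rightarrow> complex" where
  "phi c = (CLINT \<omega>|M. iexp (c * X 0 \<omega>))"

lemma char_X: "(CLINT \<omega>|M. iexp (c * X i \<omega>)) = phi c"
  unfolding phi_def by (rule integral_ident) measurable

lemma integrable_iexp_measurable: "f \<in> borel_measurable M \<Longrightarrow> integrable M (\<lambda>\<omega>. iexp (f \<omega>))"
  by (rule integrable_iexp) auto

lemma integral_cos_sum_le:
  fixes c :: "nat \<Rightarrow> real" and d :: real
  shows "(LINT \<omega>|M. cos (d + (\<Sum>i<n. c i * X i \<omega>))) \<le> (\<Prod>i<n. cmod (phi (c i)))"
proof -
  have ind: "indep_vars (\<lambda>_. borel) (\<lambda>i \<omega>. iexp (c i * X i \<omega>)) {..<n}"
    by (rule indep_vars_compose2[OF indep_vars_subset[OF indep]]) auto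
  have int: "integrable M (\<lambda>\<omega>. iexp (c i * X i \<omega>))" for i
    by (rule integrable_iexp_measurable) measurable
  have pointwise: "cos (d + (\<Sum>i<n. c i * X i \<omega>)) = Re (iexp d * (\<Prod>i<n. iexp (c i * X i \<omega>)))" for \<omega>
  proof -
    have "iexp d * (\<Prod>i<n. iexp (c i * X i \<omega>)) = iexp (d + (\<Sum>i<n. c i * X i \<omega>))"
      by (simp add: exp_sum[symmetric] exp_add[symmetric] sum_distrib_left distrib_left)
    then show ?thesis by (simp add: Re_exp)
  qed
  have product: "(CLINT \<omega>|M. (\<Prod>i<n. iexp (c i * X i \<omega>))) = (\<Prod>i<n. phi (c i))"
    using indep_vars_lebesgue_integral[OF finite_lessThan ind int] by (simp only: char_X)
  have "integrable M (\<lambda>\<omega>. iexp d * (\<Prod>i<n. iexp (c i * X i \<omega>)))"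
    using int by (intro integrable_mult_right indep_vars_integrable[OF _ ind]) auto
  then have "(LINT \<omega>|M. cos (d + (\<Sum>i<n. c i * X i \<omega>)))
      = Re (CLINT \<omega>|M. iexp d * (\<Prod>i<n. iexp (c i * X i \<omega>)))"
    unfolding pointwise by (rule integral_Re)
  also have "\<dots> = Re (iexp d * (\<Prod>i<n. phi (c i)))"
    by (simp only: integral_mult_right_zero product)
  also have "\<dots> \<le> cmod (iexp d * (\<Prod>i<n. phi (c i)))"
    by (rule complex_Re_le_cmod)
  also have "\<dots> = (\<Prod>i<n. cmod (phi (c i)))"
    by (simp add: norm_mult prod_norm)
  finally show ?thesis .
qed

text \<open>\<open>psi c = 1 - \<bar>phi c\<bar>\<^sup>2\<close> measures how far the symmetrisation \<open>X 0 - X 1\<close> is from being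
  concentrated on the lattice \<open>(2\<pi>/c) \<int>\<close>.\<close>

definition psi :: "real \<Rightarrow> real" where
  "psi c = (LINT \<omega>|M. 1 - cos (c * (X 0 \<omega> - X 1 \<omega>)))"

lemma integrable_cos_diff: "integrable M (\<lambda>\<omega>. cos (c * (X 0 \<omega> - X 1 \<omega>)))"
  by (rule integrable_const_bound[where B = 1]) auto

lemma integrable_one_minus_cos_diff: "integrable M (\<lambda>\<omega>. 1 - cos (c * (X 0 \<omega> - X 1 \<omega>)))"
  using integrable_cos_diff by auto

lemma norm_phi_square: "(cmod (phi c))\<^sup>2 = 1 - psi c"
proof -
  have cnj_iexp: "cnj (iexp t) = iexp (- t)" for t
    by (simp add: complex_eq_iff Re_exp Im_exp)
  have "cnj (phi c) = (CLINT \<omega>|M. cnj (iexp (c * X 0 \<omega>)))"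
    unfolding phi_def by simp
  also have "\<dots> = phi (- c)"
    unfolding phi_def cnj_iexp by simp
  finally have cnj_phi: "cnj (phi c) = (CLINT \<omega>|M. iexp ((- c) * X 1 \<omega>))"
    by (simp only: char_X)
  define f where "f i \<omega> = iexp ((if i = (0::nat) then c else - c) * X i \<omega>)" for i \<omega>
  have ind: "indep_vars (\<lambda>_. borel) f {0, 1}"
    unfolding f_def by (rule indep_vars_compose2[OF indep_vars_subset[OF indep]]) auto
  have int: "integrable M (f i)" for i
    unfolding f_def by (rule integrable_iexp_measurable) measurable
  have "(CLINT \<omega>|M. (\<Prod>i\<in>{0,1}. f i \<omega>)) = (\<Prod>i\<in>{0,1}. CLINT \<omega>|M. f i \<omega>)"
    by (rule indep_vars_lebesgue_integral[OF _ ind]) (auto intro: int)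
  moreover have "(CLINT \<omega>|M. f 0 \<omega>) = phi c"
    unfolding f_def phi_def by simp
  moreover have "(CLINT \<omega>|M. f 1 \<omega>) = cnj (phi c)"
    unfolding f_def cnj_phi by simp
  moreover have "f 0 \<omega> * f 1 \<omega> = iexp (c * (X 0 \<omega> - X 1 \<omega>))" for \<omega>
    unfolding f_def by (simp add: exp_add[symmetric] algebra_simps)
  ultimately have product: "phi c * cnj (phi c) = (CLINT \<omega>|M. iexp (c * (X 0 \<omega> - X 1 \<omega>)))"
    by simp
  have "(cmod (phi c))\<^sup>2 = Re (complex_of_real ((cmod (phi c))\<^sup>2))"
    by simp
  also have "\<dots> = Re (CLINT \<omega>|M. iexp (c * (X 0 \<omega> - X 1 \<omega>)))"
    by (simp only: complex_norm_square product)
  also have "\<dots> = (LINT \<omega>|M. Re (iexp (c * (X 0 \<omega> - X 1 \<omega>))))"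
    by (rule integral_Re[symmetric]) (rule integrable_iexp_measurable, measurable)
  also have "\<dots> = (LINT \<omega>|M. cos (c * (X 0 \<omega> - X 1 \<omega>)))"
    by (simp add: Re_exp)
  also have "\<dots> = 1 - psi c"
    unfolding psi_def using integrable_cos_diff
    by (simp add: prob_space)
  finally show ?thesis .
qed

lemma psi_nonneg: "0 \<le> psi c"
  unfolding psi_def by (intro Bochner_Integration.integral_nonneg) simp

lemma norm_phi_le: "cmod (phi c) \<le> exp (- psi c / 2)"
proof (rule power2_le_imp_le)
  show "(cmod (phi c))\<^sup>2 \<le> (exp (- psi c / 2))\<^sup>2"
    unfolding norm_phi_square using exp_ge_add_one_self[of "- psi c"]
    by (simp add: power2_eq_square exp_add[symmetric])
qed simp

lemma psi_diff_le: "psi (u - v) \<le> 2 * psi u + 2 * psi v"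
proof -
  have "psi (u - v) \<le> (LINT \<omega>|M. 2 * (1 - cos (u * (X 0 \<omega> - X 1 \<omega>))) + 2 * (1 - cos (v * (X 0 \<omega> - X 1 \<omega>))))"
    unfolding psi_def
  proof (rule integral_mono)
    fix \<omega>
    show "1 - cos ((u - v) * (X 0 \<omega> - X 1 \<omega>))
        \<le> 2 * (1 - cos (u * (X 0 \<omega> - X 1 \<omega>))) + 2 * (1 - cos (v * (X 0 \<omega> - X 1 \<omega>)))"
      using one_minus_cos_diff_le[of "u * (X 0 \<omega> - X 1 \<omega>)" "v * (X 0 \<omega> - X 1 \<omega>)"]
      by (simp add: left_diff_distrib)
  qed (rule integrable_one_minus_cos_diff,
      intro Bochner_Integration.integrable_add integrable_mult_right integrable_one_minus_cos_diff)
  also have "\<dots> = 2 * psi u + 2 * psi v"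
    unfolding psi_def
    by (simp only: Bochner_Integration.integral_add integrable_mult_right integrable_one_minus_cos_diff
        integral_mult_right_zero)
  finally show ?thesis .
qed

lemma psi_le: "psi u \<le> 2 * u\<^sup>2"
proof -
  have "psi u \<le> (LINT \<omega>|M. u\<^sup>2 * ((X 0 \<omega>)\<^sup>2 + (X 1 \<omega>)\<^sup>2))"
    unfolding psi_def
  proof (rule integral_mono)
    fix \<omega>
    have "1 - cos (u * (X 0 \<omega> - X 1 \<omega>)) \<le> u\<^sup>2 * ((X 0 \<omega> - X 1 \<omega>)\<^sup>2 / 2)"
      using one_minus_cos_le[of "u * (X 0 \<omega> - X 1 \<omega>)"] by (simp add: power_mult_distrib)
    also have "\<dots> \<le> u\<^sup>2 * ((X 0 \<omega>)\<^sup>2 + (X 1 \<omega>)\<^sup>2)"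
      using square_add_le[of "X 0 \<omega>" "- X 1 \<omega>"] by (intro mult_left_mono) auto
    finally show "1 - cos (u * (X 0 \<omega> - X 1 \<omega>)) \<le> u\<^sup>2 * ((X 0 \<omega>)\<^sup>2 + (X 1 \<omega>)\<^sup>2)" .
  qed (rule integrable_one_minus_cos_diff,
      intro integrable_mult_right Bochner_Integration.integrable_add integrable_X_square)
  also have "\<dots> = 2 * u\<^sup>2"
    using integrable_X_square[of 0] integrable_X_square[of 1] by (simp add: integral_X_square)
  finally show ?thesis .
qed

lemma integral_diff_square: "(LINT \<omega>|M. (X 0 \<omega> - X 1 \<omega>)\<^sup>2) = 2"
  and integrable_diff_square: "integrable M (\<lambda>\<omega>. (X 0 \<omega> - X 1 \<omega>)\<^sup>2)"
proof -
  have ind: "indep_vars (\<lambda>_. borel) X {0, 1}"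
    by (rule indep_vars_subset[OF indep]) auto
  have "integrable M (\<lambda>\<omega>. \<Prod>i\<in>{0,1}. X i \<omega>)"
    by (rule indep_vars_integrable[OF _ ind]) (auto intro: integrable_X)
  then have int_prod: "integrable M (\<lambda>\<omega>. X 0 \<omega> * X 1 \<omega>)"
    by simp
  have "(LINT \<omega>|M. (\<Prod>i\<in>{0,1}. X i \<omega>)) = (\<Prod>i\<in>{0,1}. (LINT \<omega>|M. X i \<omega>))"
    by (rule indep_vars_lebesgue_integral[OF _ ind]) (auto intro: integrable_X)
  then have int_prod_eq: "(LINT \<omega>|M. X 0 \<omega> * X 1 \<omega>) = 0"
    by (simp add: integral_X)
  have expand: "(X 0 \<omega> - X 1 \<omega>)\<^sup>2 = (X 0 \<omega>)\<^sup>2 + (X 1 \<omega>)\<^sup>2 - 2 * (X 0 \<omega> * X 1 \<omega>)" for \<omega>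
    by (simp add: power2_eq_square algebra_simps)
  have int_sum: "integrable M (\<lambda>\<omega>. (X 0 \<omega>)\<^sup>2 + (X 1 \<omega>)\<^sup>2)"
    by (intro Bochner_Integration.integrable_add integrable_X_square)
  have int_twice: "integrable M (\<lambda>\<omega>. 2 * (X 0 \<omega> * X 1 \<omega>))"
    by (intro integrable_mult_right int_prod)
  show "integrable M (\<lambda>\<omega>. (X 0 \<omega> - X 1 \<omega>)\<^sup>2)"
    unfolding expand using int_sum int_twice by (rule Bochner_Integration.integrable_diff)
  have "(LINT \<omega>|M. (X 0 \<omega> - X 1 \<omega>)\<^sup>2)
      = (LINT \<omega>|M. (X 0 \<omega>)\<^sup>2) + (LINT \<omega>|M. (X 1 \<omega>)\<^sup>2) - 2 * (LINT \<omega>|M. X 0 \<omega> * X 1 \<omega>)"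
    unfolding expand
    by (simp only: Bochner_Integration.integral_diff[OF int_sum int_twice]
        Bochner_Integration.integral_add[OF integrable_X_square integrable_X_square]
        integral_mult_right_zero)
  then show "(LINT \<omega>|M. (X 0 \<omega> - X 1 \<omega>)\<^sup>2) = 2"
    by (simp only: int_prod_eq integral_X_square)
qed

lemma truncated_second_moment_gt_one:
  "\<exists>k::nat. 1 < (LINT \<omega>|M. (if \<bar>X 0 \<omega> - X 1 \<omega>\<bar> \<le> real k then (X 0 \<omega> - X 1 \<omega>)\<^sup>2 else 0))"
proof -
  let ?Y = "\<lambda>\<omega>. X 0 \<omega> - X 1 \<omega>"
  have "(\<lambda>k. LINT \<omega>|M. (if \<bar>?Y \<omega>\<bar> \<le> real k then (?Y \<omega>)\<^sup>2 else 0)) \<longlonglongrightarrow> (LINT \<omega>|M. (?Y \<omega>)\<^sup>2)"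
  proof (rule integral_dominated_convergence[where w = "\<lambda>\<omega>. (?Y \<omega>)\<^sup>2"])
    show "AE \<omega> in M. (\<lambda>k. if \<bar>?Y \<omega>\<bar> \<le> real k then (?Y \<omega>)\<^sup>2 else 0) \<longlonglongrightarrow> (?Y \<omega>)\<^sup>2"
    proof (rule AE_I2)
      fix \<omega>
      obtain N :: nat where "\<bar>?Y \<omega>\<bar> \<le> real N"
        using real_arch_simple by blast
      then have "\<forall>\<^sub>F k in sequentially. (if \<bar>?Y \<omega>\<bar> \<le> real k then (?Y \<omega>)\<^sup>2 else 0) = (?Y \<omega>)\<^sup>2"
        unfolding eventually_sequentially by (auto intro!: exI[of _ N])
      then show "(\<lambda>k. if \<bar>?Y \<omega>\<bar> \<le> real k then (?Y \<omega>)\<^sup>2 else 0) \<longlonglongrightarrow> (?Y \<omega>)\<^sup>2"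
        by (rule tendsto_eventually)
    qed
  qed (measurable, rule integrable_diff_square, auto)
  then have "\<forall>\<^sub>F k in sequentially. 1 < (LINT \<omega>|M. (if \<bar>?Y \<omega>\<bar> \<le> real k then (?Y \<omega>)\<^sup>2 else 0))"
    unfolding integral_diff_square by (rule order_tendstoD) simp
  then show ?thesis
    by (auto simp: eventually_sequentially)
qed

text \<open>Only second moments are available, so the quadratic lower bound for \<open>1 - cos\<close> is applied
  on a truncation of \<open>X 0 - X 1\<close> that still carries more than half of its variance \<open>2\<close>.\<close>

lemma psi_ge: "\<exists>d0>0. d0 \<le> 1 \<and> (\<forall>u. \<bar>u\<bar> \<le> d0 \<longrightarrow> u\<^sup>2 / 5 \<le> psi u)"
proof -
  let ?Y = "\<lambda>\<omega>. X 0 \<omega> - X 1 \<omega>"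
  obtain k :: nat where k: "1 < (LINT \<omega>|M. (if \<bar>?Y \<omega>\<bar> \<le> real k then (?Y \<omega>)\<^sup>2 else 0))"
    using truncated_second_moment_gt_one by blast
  define d0 where "d0 = 1 / (real k + 1)"
  have "u\<^sup>2 / 5 \<le> psi u" if u: "\<bar>u\<bar> \<le> d0" for u
  proof -
    have "u\<^sup>2 / 5 \<le> u\<^sup>2 / 5 * (LINT \<omega>|M. (if \<bar>?Y \<omega>\<bar> \<le> real k then (?Y \<omega>)\<^sup>2 else 0))"
      using k by (simp add: mult_le_cancel_left1)
    also have "\<dots> = (LINT \<omega>|M. u\<^sup>2 / 5 * (if \<bar>?Y \<omega>\<bar> \<le> real k then (?Y \<omega>)\<^sup>2 else 0))"
      by simp
    also have "\<dots> \<le> psi u"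
      unfolding psi_def
    proof (rule integral_mono)
      have "integrable M (\<lambda>\<omega>. if \<bar>?Y \<omega>\<bar> \<le> real k then (?Y \<omega>)\<^sup>2 else 0)"
        by (rule integrable_const_bound[where B = "(real k)\<^sup>2"])
          (auto simp: abs_le_square_iff[symmetric])
      then show "integrable M (\<lambda>\<omega>. u\<^sup>2 / 5 * (if \<bar>?Y \<omega>\<bar> \<le> real k then (?Y \<omega>)\<^sup>2 else 0))"
        by (rule integrable_mult_right)
      fix \<omega>
      show "u\<^sup>2 / 5 * (if \<bar>?Y \<omega>\<bar> \<le> real k then (?Y \<omega>)\<^sup>2 else 0) \<le> 1 - cos (u * ?Y \<omega>)"
      proof (cases "\<bar>?Y \<omega>\<bar> \<le> real k")
        case True
        have "\<bar>u * ?Y \<omega>\<bar> \<le> d0 * real k"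
          unfolding abs_mult using u True by (intro mult_mono) auto
        also have "\<dots> \<le> 1"
          by (simp add: d0_def field_simps)
        finally have "(u * ?Y \<omega>)\<^sup>2 / 5 \<le> 1 - cos (u * ?Y \<omega>)"
          by (rule one_minus_cos_ge)
        then show ?thesis
          using True by (simp add: power_mult_distrib)
      qed simp
    qed (rule integrable_one_minus_cos_diff)
    finally show ?thesis .
  qed
  moreover have "0 < d0" "d0 \<le> 1"
    by (auto simp: d0_def)
  ultimately show ?thesis by blast
qed

lemma integral_cos_affine_le:
  "(LINT \<omega>|M. cos (d + \<alpha> * second_partial_sum X n \<omega> + \<beta> * partial_sum X n \<omega>))
    \<le> exp (- (\<Sum>a=1..n. psi (\<alpha> * real a + \<beta>)) / 2)"
proof -
  define c where "c i = \<alpha> * real (n - i) + \<beta>" for i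
  have affine: "d + \<alpha> * second_partial_sum X n \<omega> + \<beta> * partial_sum X n \<omega>
      = d + (\<Sum>i<n. c i * X i \<omega>)" for \<omega>
  proof -
    have "\<alpha> * second_partial_sum X n \<omega> + \<beta> * partial_sum X n \<omega>
        = (\<Sum>i<n. \<alpha> * (real (n - i) * X i \<omega>) + \<beta> * X i \<omega>)"
      by (simp only: second_partial_sum_eq partial_sum_def sum_distrib_left sum.distrib)
    then show ?thesis
      by (simp add: c_def distrib_right mult.assoc)
  qed
  have "(LINT \<omega>|M. cos (d + \<alpha> * second_partial_sum X n \<omega> + \<beta> * partial_sum X n \<omega>))
      \<le> (\<Prod>i<n. cmod (phi (c i)))"
    unfolding affine by (rule integral_cos_sum_le)
  also have "\<dots> \<le> (\<Prod>i<n. exp (- psi (c i) / 2))"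
    by (intro prod_mono conjI norm_phi_le) auto
  also have "\<dots> = exp (- (\<Sum>i<n. psi (c i)) / 2)"
    by (simp add: exp_sum[symmetric] sum_negf sum_divide_distrib)
  also have "(\<Sum>i<n. psi (c i)) = (\<Sum>a=1..n. psi (\<alpha> * real a + \<beta>))"
    unfolding c_def by (rule sum.reindex_bij_witness[of _ "\<lambda>a. n - a" "\<lambda>i. n - i"]) auto
  finally show ?thesis .
qed

lemma integral_cos_decay:
  obtains c \<kappa> \<delta> where "0 < c" "0 < \<kappa>" "0 < \<delta>" "\<delta> \<le> 1"
    "\<And>n \<alpha> \<beta> d. 2 \<le> n \<Longrightarrow> \<bar>\<alpha>\<bar> \<le> \<delta> \<Longrightarrow> \<bar>\<beta>\<bar> \<le> \<delta> \<Longrightarrow>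
      (LINT \<omega>|M. cos (d + \<alpha> * second_partial_sum X n \<omega> + \<beta> * partial_sum X n \<omega>))
        \<le> exp (- (c * (real n ^ 3 * \<alpha>\<^sup>2 + real n * \<beta>\<^sup>2)) / 2) + exp (- (\<kappa> * real n) / 2)"
proof -
  obtain \<delta> where \<delta>: "0 < \<delta>" "\<delta> \<le> 1" and psi_ge_square: "\<And>u. \<bar>u\<bar> \<le> \<delta> \<Longrightarrow> u\<^sup>2 / 5 \<le> psi u"
    using psi_ge by blast
  interpret psi: quasi_quadratic psi "1/5" \<delta> 2
    by unfold_locales (use psi_nonneg psi_diff_le psi_le psi_ge_square \<delta> in auto)
  have "(LINT \<omega>|M. cos (d + \<alpha> * second_partial_sum X n \<omega> + \<beta> * partial_sum X n \<omega>))
      \<le> exp (- (1/1800 * (real n ^ 3 * \<alpha>\<^sup>2 + real n * \<beta>\<^sup>2)) / 2) + exp (- (psi.kappa * real n) / 2)"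
    if "2 \<le> n" "\<bar>\<alpha>\<bar> \<le> \<delta>" "\<bar>\<beta>\<bar> \<le> \<delta>" for n \<alpha> \<beta> d
  proof -
    let ?A = "1/1800 * (real n ^ 3 * \<alpha>\<^sup>2 + real n * \<beta>\<^sup>2)" and ?B = "psi.kappa * real n"
    have "min ?A ?B \<le> (\<Sum>a=1..n. psi (\<alpha> * real a + \<beta>))"
      using psi.sum_ge[OF that] by simp
    then have "exp (- (\<Sum>a=1..n. psi (\<alpha> * real a + \<beta>)) / 2) \<le> exp (- min ?A ?B / 2)"
      by simp
    also have "\<dots> \<le> exp (- ?A / 2) + exp (- ?B / 2)"
      unfolding min_def using exp_gt_zero[of "- ?A / 2"] exp_gt_zero[of "- ?B / 2"] by auto
    finally show ?thesis
      by (rule order_trans[OF integral_cos_affine_le])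
  qed
  with psi.kappa_pos \<delta> show thesis
    by (intro that[of "1/1800" psi.kappa \<delta>]) auto
qed

end

section \<open>Fej\'er kernels and a smoothing inequality\<close>

definition fejer_kernel :: "nat \<Rightarrow> real \<Rightarrow> real" where
  "fejer_kernel N u = (\<Sum>k<N. \<Sum>l<N. cos ((real k - real l) * u))"

lemma fejer_kernel_eq: "fejer_kernel N u = (\<Sum>k<N. cos (real k * u))\<^sup>2 + (\<Sum>k<N. sin (real k * u))\<^sup>2"
proof -
  have "fejer_kernel N u
      = (\<Sum>k<N. \<Sum>l<N. cos (real k * u) * cos (real l * u) + sin (real k * u) * sin (real l * u))"
    unfolding fejer_kernel_def by (simp add: left_diff_distrib cos_diff)
  then show ?thesis
    by (simp add: power2_eq_square sum_product sum.distrib)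
qed

lemma fejer_kernel_nonneg: "0 \<le> fejer_kernel N u"
  unfolding fejer_kernel_eq by simp

lemma fejer_kernel_le: "fejer_kernel N u \<le> real N ^ 2"
proof -
  have "fejer_kernel N u \<le> (\<Sum>k<N. \<Sum>l<N. 1)"
    unfolding fejer_kernel_def by (intro sum_mono) simp
  then show ?thesis
    by (simp add: power2_eq_square)
qed

lemma fejer_kernel_ge:
  assumes "1 \<le> N" "\<bar>u\<bar> \<le> 1 / real N"
  shows "real N ^ 2 / 2 \<le> fejer_kernel N u"
proof -
  have "1/2 \<le> cos ((real k - real l) * u)" if "k < N" "l < N" for k l
  proof (rule cos_ge_one_half)
    have "\<bar>real k - real l\<bar> * \<bar>u\<bar> \<le> real N * (1 / real N)"
      using that assms by (intro mult_mono) auto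
    then show "\<bar>(real k - real l) * u\<bar> \<le> 1"
      using assms by (simp add: abs_mult)
  qed
  then have "(\<Sum>k<N. \<Sum>l<N. 1/2) \<le> fejer_kernel N u"
    unfolding fejer_kernel_def by (intro sum_mono) auto
  then show ?thesis
    by (simp add: power2_eq_square)
qed

lemma sum_exp_abs_diff_le:
  fixes \<gamma> :: real
  assumes "0 < \<gamma>"
  shows "(\<Sum>l<N. exp (- \<gamma> * \<bar>real k - real l\<bar>)) \<le> 2 / (1 - exp (- \<gamma>))"
proof -
  define r where "r = exp (- \<gamma>)"
  have r: "0 \<le> r" "r < 1"
    using assms by (auto simp: r_def)
  have geometric: "(\<Sum>i\<in>I. r ^ i) \<le> 1 / (1 - r)" if "finite I" for I :: "nat set"
  proof -
    obtain m where "I \<subseteq> {..<m}"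
      using \<open>finite I\<close> finite_nat_bounded by blast
    then have "(\<Sum>i\<in>I. r ^ i) \<le> (\<Sum>i<m. r ^ i)"
      using r by (intro sum_mono2) auto
    also have "\<dots> = (1 - r ^ m) / (1 - r)"
      using r by (simp add: sum_gp_strict)
    also have "\<dots> \<le> 1 / (1 - r)"
      using r by (intro divide_right_mono) auto
    finally show ?thesis .
  qed
  have power: "exp (- \<gamma> * real m) = r ^ m" for m
    by (simp add: r_def exp_of_nat_mult[symmetric] mult.commute)
  let ?A = "{l. l < N \<and> l \<le> k}" and ?B = "{l. l < N \<and> k < l}"
  have split: "{..<N} = ?A \<union> ?B"
    by auto
  have "(\<Sum>l<N. exp (- \<gamma> * \<bar>real k - real l\<bar>))
      = (\<Sum>l\<in>?A. exp (- \<gamma> * \<bar>real k - real l\<bar>)) + (\<Sum>l\<in>?B. exp (- \<gamma> * \<bar>real k - real l\<bar>))"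
    unfolding split by (rule sum.union_disjoint) auto
  also have "(\<Sum>l\<in>?A. exp (- \<gamma> * \<bar>real k - real l\<bar>)) = (\<Sum>l\<in>?A. r ^ (k - l))"
    by (intro sum.cong refl) (auto simp: power[symmetric])
  also have "(\<Sum>l\<in>?B. exp (- \<gamma> * \<bar>real k - real l\<bar>)) = (\<Sum>l\<in>?B. r ^ (l - k))"
    by (intro sum.cong refl) (auto simp: power[symmetric])
  also have "(\<Sum>l\<in>?A. r ^ (k - l)) = (\<Sum>i\<in>(\<lambda>l. k - l) ` ?A. r ^ i)"
    by (rule sum.reindex[symmetric, unfolded comp_def]) (auto simp: inj_on_def)
  also have "(\<Sum>l\<in>?B. r ^ (l - k)) = (\<Sum>i\<in>(\<lambda>l. l - k) ` ?B. r ^ i)"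
    by (rule sum.reindex[symmetric, unfolded comp_def]) (auto simp: inj_on_def)
  finally show ?thesis
    using geometric[of "(\<lambda>l. k - l) ` ?A"] geometric[of "(\<lambda>l. l - k) ` ?B"] by (simp add: r_def)
qed

context prob_space
begin

lemma integral_cos_mult_cos:
  fixes u v :: "'a \<Rightarrow> real"
  assumes [measurable]: "u \<in> borel_measurable M" "v \<in> borel_measurable M"
  shows "(LINT \<omega>|M. cos (a * u \<omega>) * cos (b * v \<omega>))
    = ((LINT \<omega>|M. cos (a * u \<omega> + b * v \<omega>)) + (LINT \<omega>|M. cos (a * u \<omega> + (- b) * v \<omega>))) / 2"
proof -
  have int: "integrable M (\<lambda>\<omega>. cos (a * u \<omega> + b' * v \<omega>))" for b'
    by (rule integrable_const_bound[where B = 1]) auto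
  have "cos (a * u \<omega>) * cos (b * v \<omega>) = (cos (a * u \<omega> + b * v \<omega>) + cos (a * u \<omega> + (- b) * v \<omega>)) / 2"
    for \<omega>
    unfolding cos_times_cos by (simp add: algebra_simps)
  then show ?thesis
    by (simp only: integral_divide_zero Bochner_Integration.integral_add[OF int int])
qed

lemma integral_fejer_kernel_product_le:
  fixes u v :: "'a \<Rightarrow> real" and N1 N2 :: nat and \<gamma> \<epsilon> :: real
  assumes [measurable]: "u \<in> borel_measurable M" "v \<in> borel_measurable M"
    and "0 < \<gamma>"
    and decay: "\<And>i j. \<bar>i\<bar> < int N1 \<Longrightarrow> \<bar>j\<bar> < int N2 \<Longrightarrow>
      (LINT \<omega>|M. cos (of_int i * u \<omega> + of_int j * v \<omega>))
        \<le> exp (- \<gamma> * \<bar>of_int i\<bar>) * exp (- \<gamma> * \<bar>of_int j\<bar>) + \<epsilon>"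
  shows "(LINT \<omega>|M. fejer_kernel N1 (u \<omega>) * fejer_kernel N2 (v \<omega>))
    \<le> real N1 * real N2 * (2 / (1 - exp (- \<gamma>)))\<^sup>2 + (real N1 * real N2)\<^sup>2 * \<epsilon>"
proof -
  define D where "D = 2 / (1 - exp (- \<gamma>))"
  define e where "e k l = exp (- \<gamma> * \<bar>real k - real l\<bar>)" for k l :: nat
  define T where "T k l p q \<omega> = cos ((real k - real l) * u \<omega>) * cos ((real p - real q) * v \<omega>)"
    for k l p q \<omega>
  have int_T: "integrable M (T k l p q)" for k l p q
    unfolding T_def by (rule integrable_const_bound[where B = 1]) (auto simp: abs_mult mult_le_one)
  have T_le: "(LINT \<omega>|M. T k l p q \<omega>) \<le> e k l * e p q + \<epsilon>"
    if "k < N1" "l < N1" "p < N2" "q < N2" for k l p q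
  proof -
    define i where "i = int k - int l"
    define j where "j = int p - int q"
    have ij: "\<bar>i\<bar> < int N1" "\<bar>j\<bar> < int N2" "\<bar>- j\<bar> < int N2"
      using that by (auto simp: i_def j_def)
    have "(LINT \<omega>|M. T k l p q \<omega>)
        = ((LINT \<omega>|M. cos (of_int i * u \<omega> + of_int j * v \<omega>))
          + (LINT \<omega>|M. cos (of_int i * u \<omega> + of_int (- j) * v \<omega>))) / 2"
      unfolding T_def using integral_cos_mult_cos[of u v "of_int i" "of_int j"] by (simp add: i_def j_def)
    also have "\<dots> \<le> e k l * e p q + \<epsilon>"
      using decay[OF ij(1,2)] decay[OF ij(1,3)] by (simp add: e_def i_def j_def abs_minus_commute)
    finally show ?thesis .
  qed
  have "(LINT \<omega>|M. fejer_kernel N1 (u \<omega>) * fejer_kernel N2 (v \<omega>))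
      = (\<Sum>k<N1. \<Sum>l<N1. \<Sum>p<N2. \<Sum>q<N2. LINT \<omega>|M. T k l p q \<omega>)"
  proof -
    have "fejer_kernel N1 (u \<omega>) * fejer_kernel N2 (v \<omega>) = (\<Sum>k<N1. \<Sum>l<N1. \<Sum>p<N2. \<Sum>q<N2. T k l p q \<omega>)"
      for \<omega>
      unfolding fejer_kernel_def T_def by (simp only: sum_distrib_right) (simp only: sum_distrib_left)
    then show ?thesis
      using int_T by simp
  qed
  also have "\<dots> \<le> (\<Sum>k<N1. \<Sum>l<N1. \<Sum>p<N2. \<Sum>q<N2. e k l * e p q + \<epsilon>)"
    by (intro sum_mono T_le) auto
  also have "\<dots> = (\<Sum>k<N1. \<Sum>l<N1. e k l) * (\<Sum>p<N2. \<Sum>q<N2. e p q) + (real N1 * real N2)\<^sup>2 * \<epsilon>"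
  proof -
    have inner: "(\<Sum>p<N2. \<Sum>q<N2. e k l * e p q + \<epsilon>) = e k l * (\<Sum>p<N2. \<Sum>q<N2. e p q) + real N2 * real N2 * \<epsilon>"
      for k l
      by (simp add: sum.distrib sum_distrib_left)
    have "(\<Sum>k<N1. \<Sum>l<N1. e k l * (\<Sum>p<N2. \<Sum>q<N2. e p q) + real N2 * real N2 * \<epsilon>)
        = (\<Sum>k<N1. \<Sum>l<N1. e k l) * (\<Sum>p<N2. \<Sum>q<N2. e p q) + real N1 * real N1 * (real N2 * real N2 * \<epsilon>)"
      by (simp add: sum.distrib sum_distrib_right)
    then show ?thesis
      by (simp add: inner power2_eq_square mult_ac)
  qed
  also have "\<dots> \<le> (real N1 * D) * (real N2 * D) + (real N1 * real N2)\<^sup>2 * \<epsilon>"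
  proof -
    have "(\<Sum>k<N. \<Sum>l<N. e k l) \<le> (\<Sum>k<N. D)" for N
      unfolding e_def D_def by (intro sum_mono sum_exp_abs_diff_le \<open>0 < \<gamma>\<close>)
    then have "(\<Sum>k<N. \<Sum>l<N. e k l) \<le> real N * D" for N
      by simp
    moreover have "0 \<le> (\<Sum>p<N2. \<Sum>q<N2. e p q)"
      by (simp add: e_def sum_nonneg)
    moreover have "0 \<le> D"
      using \<open>0 < \<gamma>\<close> by (simp add: D_def)
    ultimately show ?thesis
      by (intro add_right_mono mult_mono) auto
  qed
  finally show ?thesis
    by (simp add: D_def power2_eq_square mult_ac)
qed

text \<open>An Esseen-type inequality: the Fej\'er kernels dominate the indicator of the box and
  expand into characteristic-function values on the lattice.\<close>

lemma smoothing_inequality: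
  fixes u v :: "'a \<Rightarrow> real" and N1 N2 :: nat and \<gamma> \<epsilon> :: real
  assumes [measurable]: "u \<in> borel_measurable M" "v \<in> borel_measurable M"
    and "1 \<le> N1" "1 \<le> N2" "0 < \<gamma>"
    and decay: "\<And>i j. \<bar>i\<bar> < int N1 \<Longrightarrow> \<bar>j\<bar> < int N2 \<Longrightarrow>
      (LINT \<omega>|M. cos (of_int i * u \<omega> + of_int j * v \<omega>))
        \<le> exp (- \<gamma> * \<bar>of_int i\<bar>) * exp (- \<gamma> * \<bar>of_int j\<bar>) + \<epsilon>"
  shows "measure M {\<omega>\<in>space M. \<bar>u \<omega>\<bar> \<le> 1 / real N1 \<and> \<bar>v \<omega>\<bar> \<le> 1 / real N2}
    \<le> 16 / (real N1 * real N2 * (1 - exp (- \<gamma>))\<^sup>2) + 4 * \<epsilon>"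
proof -
  let ?G = "\<lambda>\<omega>. fejer_kernel N1 (u \<omega>) * fejer_kernel N2 (v \<omega>)"
  define L where "L = (real N1 * real N2)\<^sup>2 / 4"
  have L_pos: "0 < L"
    using assms by (simp add: L_def)
  have int_G: "integrable M ?G"
  proof (rule integrable_const_bound[where B = "real N1 ^ 2 * real N2 ^ 2"])
    show "AE \<omega> in M. norm (?G \<omega>) \<le> real N1 ^ 2 * real N2 ^ 2"
      by (intro AE_I2)
        (simp add: abs_mult fejer_kernel_nonneg mult_mono fejer_kernel_le)
  qed (simp add: fejer_kernel_def)
  have "{\<omega>\<in>space M. \<bar>u \<omega>\<bar> \<le> 1 / real N1 \<and> \<bar>v \<omega>\<bar> \<le> 1 / real N2} \<subseteq> {\<omega>\<in>space M. L \<le> ?G \<omega>}"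
  proof safe
    fix \<omega> assume "\<bar>u \<omega>\<bar> \<le> 1 / real N1" "\<bar>v \<omega>\<bar> \<le> 1 / real N2"
    then have "real N1 ^ 2 / 2 * (real N2 ^ 2 / 2) \<le> ?G \<omega>"
      using assms by (intro mult_mono fejer_kernel_ge) (auto simp: fejer_kernel_nonneg)
    then show "L \<le> ?G \<omega>"
      by (simp add: L_def power_mult_distrib)
  qed
  then have "measure M {\<omega>\<in>space M. \<bar>u \<omega>\<bar> \<le> 1 / real N1 \<and> \<bar>v \<omega>\<bar> \<le> 1 / real N2}
      \<le> measure M {\<omega>\<in>space M. L \<le> ?G \<omega>}"
    by (intro finite_measure_mono) (use int_G in measurable)
  also have "\<dots> \<le> (LINT \<omega>|M. ?G \<omega>) / L"
    using int_G L_pos by (intro integral_Markov_inequality_measure[where A = "space M"])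
      (auto intro!: mult_nonneg_nonneg fejer_kernel_nonneg)
  also have "\<dots> \<le> (real N1 * real N2 * (2 / (1 - exp (- \<gamma>)))\<^sup>2 + (real N1 * real N2)\<^sup>2 * \<epsilon>) / L"
    using L_pos by (intro divide_right_mono integral_fejer_kernel_product_le decay assms) auto
  also have "\<dots> = 16 / (real N1 * real N2 * (1 - exp (- \<gamma>))\<^sup>2) + 4 * \<epsilon>"
  proof -
    have "(real N1 * real N2 * (2 / r)\<^sup>2 + (real N1 * real N2)\<^sup>2 * \<epsilon>) / L
        = 16 / (real N1 * real N2 * r\<^sup>2) + 4 * \<epsilon>" if "0 < r" for r
      using that assms by (simp add: L_def field_simps power2_eq_square)
    moreover have "0 < 1 - exp (- \<gamma>)"
      using assms by simp
    ultimately show ?thesis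
      by blast
  qed
  finally show ?thesis .
qed

end

section \<open>Small-ball bounds from decay of the characteristic function\<close>

lemma ceiling_sqrt_bounds:
  fixes n :: nat
  assumes "1 \<le> n"
  defines "m \<equiv> nat \<lceil>sqrt (real n)\<rceil>"
  shows "1 \<le> m" "real n \<le> (real m)\<^sup>2" "(real m)\<^sup>2 \<le> 4 * real n"
proof -
  have s: "1 \<le> sqrt (real n)"
    using assms by simp
  then have m: "real m = of_int \<lceil>sqrt (real n)\<rceil>"
    unfolding m_def by simp
  then have "sqrt (real n) \<le> real m" "real m \<le> 2 * sqrt (real n)"
    using s by linarith+
  then have "(sqrt (real n))\<^sup>2 \<le> (real m)\<^sup>2" "(real m)\<^sup>2 \<le> (2 * sqrt (real n))\<^sup>2"
    using s by (intro power_mono; simp)+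
  then show "real n \<le> (real m)\<^sup>2" "(real m)\<^sup>2 \<le> 4 * real n"
    by (simp_all add: power_mult_distrib)
  show "1 \<le> m"
    using m s by linarith
qed

lemma exp_neg_le_four_div_square:
  fixes t :: real
  assumes "0 < t"
  shows "exp (- t) \<le> 4 / t\<^sup>2"
proof -
  have "(t/2)\<^sup>2 \<le> (exp (t/2))\<^sup>2"
    using exp_ge_add_one_self[of "t/2"] assms by (intro power_mono) linarith+
  also have "(exp (t/2))\<^sup>2 = exp t"
    by (simp add: power2_eq_square exp_add[symmetric])
  finally show ?thesis
    using assms by (simp add: exp_minus field_simps)
qed

text \<open>The point is that \<open>\<bar>i\<bar> \<le> i\<^sup>2\<close> on the integers.\<close>

lemma linear_le_lattice_quadratic:
  fixes i :: int and a m c \<delta> :: real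
  assumes "0 \<le> c" "0 < m" "m\<^sup>2 \<le> 4 * a"
  shows "c * \<delta>\<^sup>2 / 8 * \<bar>of_int i\<bar> \<le> c * (a * (of_int i * \<delta> / m)\<^sup>2) / 2"
proof -
  have "\<bar>of_int i\<bar> \<le> (of_int i :: real)\<^sup>2"
  proof (cases "i = 0")
    case False
    then have "1 \<le> \<bar>of_int i :: real\<bar>"
      by (metis of_int_1_le_iff of_int_abs zero_less_abs_iff int_one_le_iff_zero_less)
    then have "\<bar>of_int i :: real\<bar> * 1 \<le> \<bar>of_int i\<bar> * \<bar>of_int i\<bar>"
      by (intro mult_left_mono) auto
    then show ?thesis
      by (simp add: power2_eq_square)
  qed simp
  then have "\<bar>of_int i\<bar> * \<delta>\<^sup>2 * m\<^sup>2 \<le> (of_int i)\<^sup>2 * \<delta>\<^sup>2 * (4 * a)"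
    using assms by (intro mult_mono) auto
  then have "\<bar>of_int i\<bar> * \<delta>\<^sup>2 / 4 \<le> a * (of_int i * \<delta> / m)\<^sup>2"
    using assms by (simp add: field_simps)
  then have "c * (\<bar>of_int i\<bar> * \<delta>\<^sup>2 / 4) \<le> c * (a * (of_int i * \<delta> / m)\<^sup>2)"
    using assms(1) by (rule mult_left_mono)
  then show ?thesis
    by (simp add: mult_ac)
qed

locale cos_decay = prob_space M for M :: "'a measure" +
  fixes U V :: "'a \<Rightarrow> real" and n :: nat and c \<kappa> \<delta> :: real
  assumes U_measurable[measurable]: "U \<in> borel_measurable M"
    and V_measurable[measurable]: "V \<in> borel_measurable M"
    and n_ge: "2 \<le> n" and c_pos: "0 < c" and \<kappa>_pos: "0 < \<kappa>" and \<delta>_pos: "0 < \<delta>" and \<delta>_le: "\<delta> \<le> 1"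
    and decay: "\<And>\<alpha> \<beta> d. \<bar>\<alpha>\<bar> \<le> \<delta> \<Longrightarrow> \<bar>\<beta>\<bar> \<le> \<delta> \<Longrightarrow>
      (LINT \<omega>|M. cos (d + \<alpha> * U \<omega> + \<beta> * V \<omega>))
        \<le> exp (- (c * (real n ^ 3 * \<alpha>\<^sup>2 + real n * \<beta>\<^sup>2)) / 2) + exp (- (\<kappa> * real n) / 2)"
begin

text \<open>\<open>U\<close> is resolved at scale \<open>1/(n m)\<close> and \<open>V\<close> at scale \<open>1/m\<close>, where \<open>m \<approx> \<surd>n\<close>.\<close>

definition m :: nat where
  "m = nat \<lceil>sqrt (real n)\<rceil>"

abbreviation \<gamma> :: real where
  "\<gamma> \<equiv> c * \<delta>\<^sup>2 / 8"

lemma m_bounds: "1 \<le> m" "real n \<le> (real m)\<^sup>2" "(real m)\<^sup>2 \<le> 4 * real n"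
  using ceiling_sqrt_bounds[of n] n_ge unfolding m_def by auto

lemma lattice_decay:
  fixes i j :: int and x y :: real
  assumes i: "\<bar>i\<bar> \<le> int (n * m)" and j: "\<bar>j\<bar> \<le> int m"
  shows "(LINT \<omega>|M. cos (of_int i * (\<delta> / real (n * m) * (U \<omega> - x)) + of_int j * (\<delta> / real m * (V \<omega> - y))))
    \<le> exp (- \<gamma> * \<bar>of_int i\<bar>) * exp (- \<gamma> * \<bar>of_int j\<bar>) + exp (- (\<kappa> * real n) / 2)"
proof -
  define \<alpha> where "\<alpha> = of_int i * \<delta> / real (n * m)"
  define \<beta> where "\<beta> = of_int j * \<delta> / real m"
  have m_pos: "0 < real m" and n_pos: "0 < real n"
    using m_bounds n_ge by auto
  have i': "\<bar>of_int i\<bar> \<le> real (n * m)" and j': "\<bar>of_int j\<bar> \<le> real m"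
    using i j by (metis of_int_abs of_int_le_iff of_int_of_nat_eq)+
  have "\<bar>\<alpha>\<bar> = \<bar>of_int i\<bar> / real (n * m) * \<delta>"
    using \<delta>_pos by (simp add: \<alpha>_def abs_mult)
  also have "\<dots> \<le> 1 * \<delta>"
    using i' m_pos n_pos \<delta>_pos by (intro mult_right_mono) (auto simp: field_simps)
  finally have \<alpha>: "\<bar>\<alpha>\<bar> \<le> \<delta>"
    by simp
  have "\<bar>\<beta>\<bar> = \<bar>of_int j\<bar> / real m * \<delta>"
    using \<delta>_pos by (simp add: \<beta>_def abs_mult)
  also have "\<dots> \<le> 1 * \<delta>"
    using j' m_pos \<delta>_pos by (intro mult_right_mono) (auto simp: field_simps)
  finally have \<beta>: "\<bar>\<beta>\<bar> \<le> \<delta>"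
    by simp
  have "c * (real n ^ 3 * \<alpha>\<^sup>2 + real n * \<beta>\<^sup>2) / 2
      = c * (real n * (of_int i * \<delta> / real m)\<^sup>2) / 2 + c * (real n * (of_int j * \<delta> / real m)\<^sup>2) / 2"
    using n_pos by (simp add: \<alpha>_def \<beta>_def power2_eq_square power3_eq_cube field_simps)
  moreover have "\<gamma> * \<bar>of_int i\<bar> \<le> c * (real n * (of_int i * \<delta> / real m)\<^sup>2) / 2"
    and "\<gamma> * \<bar>of_int j\<bar> \<le> c * (real n * (of_int j * \<delta> / real m)\<^sup>2) / 2"
    using c_pos m_pos m_bounds by (rule_tac linear_le_lattice_quadratic; simp)+
  ultimately have "\<gamma> * \<bar>of_int i\<bar> + \<gamma> * \<bar>of_int j\<bar> \<le> c * (real n ^ 3 * \<alpha>\<^sup>2 + real n * \<beta>\<^sup>2) / 2"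
    by linarith
  then have "- (c * (real n ^ 3 * \<alpha>\<^sup>2 + real n * \<beta>\<^sup>2)) / 2 \<le> - \<gamma> * \<bar>of_int i\<bar> + - \<gamma> * \<bar>of_int j\<bar>"
    by linarith
  then have "exp (- (c * (real n ^ 3 * \<alpha>\<^sup>2 + real n * \<beta>\<^sup>2)) / 2)
      \<le> exp (- \<gamma> * \<bar>of_int i\<bar>) * exp (- \<gamma> * \<bar>of_int j\<bar>)"
    by (simp only: exp_add[symmetric] exp_le_cancel_iff)
  moreover have "of_int i * (\<delta> / real (n * m) * (U \<omega> - x)) + of_int j * (\<delta> / real m * (V \<omega> - y))
      = - (\<alpha> * x + \<beta> * y) + \<alpha> * U \<omega> + \<beta> * V \<omega>" for \<omega>
    using m_pos n_pos by (simp add: \<alpha>_def \<beta>_def field_simps)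
  ultimately show ?thesis
    using decay[OF \<alpha> \<beta>, of "- (\<alpha> * x + \<beta> * y)"] by simp
qed

lemma joint_window_le:
  "measure M {\<omega>\<in>space M. \<bar>U \<omega> - x\<bar> \<le> 1 \<and> \<bar>V \<omega> - y\<bar> \<le> 1}
    \<le> 16 / (real n * (real m)\<^sup>2 * (1 - exp (- \<gamma>))\<^sup>2) + 4 * exp (- (\<kappa> * real n) / 2)"
proof -
  let ?u = "\<lambda>\<omega>. \<delta> / real (n * m) * (U \<omega> - x)" and ?v = "\<lambda>\<omega>. \<delta> / real m * (V \<omega> - y)"
  have m_pos: "0 < real m" and n_pos: "0 < real n"
    using m_bounds n_ge by auto
  have "{\<omega>\<in>space M. \<bar>U \<omega> - x\<bar> \<le> 1 \<and> \<bar>V \<omega> - y\<bar> \<le> 1}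
      \<subseteq> {\<omega>\<in>space M. \<bar>?u \<omega>\<bar> \<le> 1 / real (n * m) \<and> \<bar>?v \<omega>\<bar> \<le> 1 / real m}"
    using \<delta>_pos \<delta>_le m_pos n_pos by (auto simp: abs_mult intro!: divide_right_mono mult_le_one)
  then have "measure M {\<omega>\<in>space M. \<bar>U \<omega> - x\<bar> \<le> 1 \<and> \<bar>V \<omega> - y\<bar> \<le> 1}
      \<le> measure M {\<omega>\<in>space M. \<bar>?u \<omega>\<bar> \<le> 1 / real (n * m) \<and> \<bar>?v \<omega>\<bar> \<le> 1 / real m}"
    by (intro finite_measure_mono) measurable
  also have "\<dots> \<le> 16 / (real (n * m) * real m * (1 - exp (- \<gamma>))\<^sup>2) + 4 * exp (- (\<kappa> * real n) / 2)"
    using m_bounds n_ge c_pos \<delta>_pos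
    by (intro smoothing_inequality lattice_decay) auto
  finally show ?thesis
    by (simp add: power2_eq_square mult_ac)
qed

lemma window_le:
  "measure M {\<omega>\<in>space M. \<bar>U \<omega> - x\<bar> \<le> 1}
    \<le> 16 / (real n * real m * (1 - exp (- \<gamma>))\<^sup>2) + 4 * exp (- (\<kappa> * real n) / 2)"
proof -
  let ?u = "\<lambda>\<omega>. \<delta> / real (n * m) * (U \<omega> - x)"
  have m_pos: "0 < real m" and n_pos: "0 < real n"
    using m_bounds n_ge by auto
  have "{\<omega>\<in>space M. \<bar>U \<omega> - x\<bar> \<le> 1}
      \<subseteq> {\<omega>\<in>space M. \<bar>?u \<omega>\<bar> \<le> 1 / real (n * m) \<and> \<bar>(\<lambda>_. 0) \<omega>\<bar> \<le> 1 / real (1::nat)}"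
    using \<delta>_pos \<delta>_le m_pos n_pos by (auto simp: abs_mult intro!: divide_right_mono mult_le_one)
  then have "measure M {\<omega>\<in>space M. \<bar>U \<omega> - x\<bar> \<le> 1}
      \<le> measure M {\<omega>\<in>space M. \<bar>?u \<omega>\<bar> \<le> 1 / real (n * m) \<and> \<bar>(\<lambda>_. 0) \<omega>\<bar> \<le> 1 / real (1::nat)}"
    by (intro finite_measure_mono) measurable
  also have "\<dots> \<le> 16 / (real (n * m) * real (1::nat) * (1 - exp (- \<gamma>))\<^sup>2) + 4 * exp (- (\<kappa> * real n) / 2)"
  proof (rule smoothing_inequality)
    fix i j :: int
    assume "\<bar>i\<bar> < int (n * m)" "\<bar>j\<bar> < int 1"
    then show "(LINT \<omega>|M. cos (of_int i * ?u \<omega> + of_int j * 0))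
        \<le> exp (- \<gamma> * \<bar>of_int i\<bar>) * exp (- \<gamma> * \<bar>of_int j\<bar>) + exp (- (\<kappa> * real n) / 2)"
      using lattice_decay[of i 0 x 0] by simp
  qed (use m_bounds n_ge c_pos \<delta>_pos in auto)
  finally show ?thesis
    by simp
qed

lemma joint_window_le_square:
  "measure M {\<omega>\<in>space M. \<bar>U \<omega> - x\<bar> \<le> 1 \<and> \<bar>V \<omega> - y\<bar> \<le> 1}
    \<le> (16 / (1 - exp (- \<gamma>))\<^sup>2 + 64 / \<kappa>\<^sup>2) / (real n)\<^sup>2"
proof -
  have n_pos: "0 < real n"
    using n_ge by simp
  have "16 / (real n * (real m)\<^sup>2 * (1 - exp (- \<gamma>))\<^sup>2) \<le> 16 / ((real n)\<^sup>2 * (1 - exp (- \<gamma>))\<^sup>2)"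
    using m_bounds n_pos c_pos \<delta>_pos
    by (intro divide_left_mono mult_right_mono) (auto simp: power2_eq_square)
  moreover have "4 * exp (- (\<kappa> * real n) / 2) \<le> 64 / (\<kappa>\<^sup>2 * (real n)\<^sup>2)"
    using exp_neg_le_four_div_square[of "\<kappa> * real n / 2"] \<kappa>_pos n_pos
    by (simp add: field_simps)
  ultimately have "measure M {\<omega>\<in>space M. \<bar>U \<omega> - x\<bar> \<le> 1 \<and> \<bar>V \<omega> - y\<bar> \<le> 1}
      \<le> 16 / ((real n)\<^sup>2 * (1 - exp (- \<gamma>))\<^sup>2) + 64 / (\<kappa>\<^sup>2 * (real n)\<^sup>2)"
    using joint_window_le[of x y] by linarith
  then show ?thesis
    by (simp add: add_divide_distrib mult.commute)
qed

lemma window_le_powr: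
  "measure M {\<omega>\<in>space M. \<bar>U \<omega> - x\<bar> \<le> 1}
    \<le> (16 / (1 - exp (- \<gamma>))\<^sup>2 + 64 / \<kappa>\<^sup>2) / real n powr (3/2)"
proof -
  have n_pos: "0 < real n"
    using n_ge by simp
  have powr: "real n powr (3/2) = real n * sqrt (real n)"
  proof -
    have "real n powr (3/2) = real n powr (1 + 1/2)"
      by simp
    also have "\<dots> = real n powr 1 * real n powr (1/2)"
      by (rule powr_add)
    finally show ?thesis
      using n_pos by (simp add: powr_half_sqrt)
  qed
  have "sqrt (real n) \<le> real m"
    using m_bounds by (intro real_le_lsqrt) auto
  then have "16 / (real n * real m * (1 - exp (- \<gamma>))\<^sup>2) \<le> 16 / (real n powr (3/2) * (1 - exp (- \<gamma>))\<^sup>2)"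
    unfolding powr using n_pos m_bounds c_pos \<delta>_pos
    by (intro divide_left_mono mult_right_mono mult_left_mono) (auto intro!: mult_pos_pos)
  moreover have "4 * exp (- (\<kappa> * real n) / 2) \<le> 64 / (\<kappa>\<^sup>2 * real n powr (3/2))"
  proof -
    have "real n * 1 \<le> real n * real n"
      using n_ge by (intro mult_left_mono) auto
    then have "sqrt (real n) \<le> real n"
      by (intro real_le_lsqrt) (auto simp: power2_eq_square)
    then have "real n powr (3/2) \<le> (real n)\<^sup>2"
      unfolding powr using n_pos by (simp add: power2_eq_square)
    then have "64 / (\<kappa>\<^sup>2 * (real n)\<^sup>2) \<le> 64 / (\<kappa>\<^sup>2 * real n powr (3/2))"
      using \<kappa>_pos n_pos by (intro divide_left_mono mult_left_mono) auto
    moreover have "4 * exp (- (\<kappa> * real n) / 2) \<le> 64 / (\<kappa>\<^sup>2 * (real n)\<^sup>2)"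
      using exp_neg_le_four_div_square[of "\<kappa> * real n / 2"] \<kappa>_pos n_pos
      by (simp add: field_simps)
    ultimately show ?thesis
      by linarith
  qed
  ultimately have "measure M {\<omega>\<in>space M. \<bar>U \<omega> - x\<bar> \<le> 1}
      \<le> 16 / (real n powr (3/2) * (1 - exp (- \<gamma>))\<^sup>2) + 64 / (\<kappa>\<^sup>2 * real n powr (3/2))"
    using window_le[of x] by linarith
  then show ?thesis
    by (simp add: add_divide_distrib mult.commute)
qed

end

theorem lemma5:
  fixes M :: "'a measure" and X :: "nat \<Rightarrow> 'a \<Rightarrow> real"
  assumes "prob_space M"
    and rv: "\<And>i. X i \<in> borel_measurable M"
    and indep: "prob_space.indep_vars M (\<lambda>_. borel) X UNIV"
    and ident: "\<And>i. distr M borel (X i) = distr M borel (X 0)"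
    and int1: "integrable M (X 0)"
    and mean0: "integral\<^sup>L M (X 0) = 0"
    and int2: "integrable M (\<lambda>\<omega>. (X 0 \<omega>)\<^sup>2)"
    and var1: "integral\<^sup>L M (\<lambda>\<omega>. (X 0 \<omega>)\<^sup>2) = 1"
  shows "\<exists>C::real. \<forall>n\<ge>1.
     (\<forall>x y. measure M {\<omega>\<in>space M. \<bar>second_partial_sum X n \<omega> - x\<bar> \<le> 1 \<and> \<bar>partial_sum X n \<omega> - y\<bar> \<le> 1}
            \<le> C / (real n)\<^sup>2)
   \<and> (\<forall>x. measure M {\<omega>\<in>space M. \<bar>second_partial_sum X n \<omega> - x\<bar> \<le> 1} \<le> C / (real n) powr (3/2))"
proof -
  interpret iid M X
    using assms by (simp add: iid_def iid_axioms_def)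
  obtain c \<kappa> \<delta> where pos: "0 < c" "0 < \<kappa>" "0 < \<delta>" "\<delta> \<le> 1" and decay:
    "\<And>n \<alpha> \<beta> d. 2 \<le> n \<Longrightarrow> \<bar>\<alpha>\<bar> \<le> \<delta> \<Longrightarrow> \<bar>\<beta>\<bar> \<le> \<delta> \<Longrightarrow>
      (LINT \<omega>|M. cos (d + \<alpha> * second_partial_sum X n \<omega> + \<beta> * partial_sum X n \<omega>))
        \<le> exp (- (c * (real n ^ 3 * \<alpha>\<^sup>2 + real n * \<beta>\<^sup>2)) / 2) + exp (- (\<kappa> * real n) / 2)"
    by (rule integral_cos_decay) blast
  define K where "K = 16 / (1 - exp (- (c * \<delta>\<^sup>2 / 8)))\<^sup>2 + 64 / \<kappa>\<^sup>2"
  have "(\<forall>x y. measure M {\<omega>\<in>space M. \<bar>second_partial_sum X n \<omega> - x\<bar> \<le> 1 \<and> \<bar>partial_sum X n \<omega> - y\<bar> \<le> 1}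
            \<le> max 1 K / (real n)\<^sup>2)
     \<and> (\<forall>x. measure M {\<omega>\<in>space M. \<bar>second_partial_sum X n \<omega> - x\<bar> \<le> 1} \<le> max 1 K / (real n) powr (3/2))"
    if "1 \<le> n" for n
  proof (cases "n = 1")
    case True
    then show ?thesis
      using prob_le_1 by (simp add: max.coboundedI1)
  next
    case False
    then interpret window: cos_decay M "second_partial_sum X n" "partial_sum X n" n c \<kappa> \<delta>
      using that pos decay by unfold_locales auto
    have "K / (real n)\<^sup>2 \<le> max 1 K / (real n)\<^sup>2" "K / real n powr (3/2) \<le> max 1 K / real n powr (3/2)"
      by (intro divide_right_mono; simp)+
    then show ?thesis
      using window.joint_window_le_square window.window_le_powr unfolding K_def
      by (meson order_trans)
  qed
  then show ?thesis
    by blast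
qed

end
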